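(* Let $\Omega,\Omega^*$ be two compact metric spaces and let $c\in C(\Omega\times\Omega^* )$. Let $\mu_1,\mu_2$ be two Borel probability measures on $\Omega$ and let $\nu$ be a Borel probability measure on $\Omega^*$. For $i=1,2$, take $\phi_i\in\Phi_c(\mu_i,\nu)$. Let $U$ be a Borel subset of $\Omega$ and suppose that $\mu_1\leq\mu_2$ on $U$ and that $\phi_1\leq\phi_2$ on $\Omega\setminus U$. Then \[ \phi_1\wedge\phi_2\in\Phi_c(\mu_1,\nu)\quad\text{and}\quad \phi_1\vee\phi_2\in\Phi_c(\mu_2,\nu). \] Additionally, $\phi_1\leq\phi_2$ on the support of $\mu_2-\mu_1$.
   Context: For $\phi\in C(\Omega)$, its $c$-transform is $\phi^c(y)=\sup_{x\in\Omega}\phi(x)-c(x,y)$, $y\in\Omega^*$ (a continuous function). For positive finite Borel measures $\mu$ on $\Omega$ and $\nu$ on $\Omega^*$, the optimal transport cost is $\mathcal T_c(\mu,\nu)=\inf_{\pi\in\Pi(\mu,\nu)}\int c\,d\pi$, where $\Pi(\mu,\nu)$ is the set of positive measures on $\Omega\times\Omega^*$ with marginals $\mu,\nu$ (and $\mathcal T_c=+\infty$ if the masses differ); by duality $\mathcal T_c(\mu,\nu)=\max_{\phi\in C(\Omega)}\int_\Omega\phi\,d\mu-\int_{\Omega^*}\phi^c\,d\nu$. The set of Kantorovich potentials is $\Phi_c(\mu,\nu)=\{\phi\in C(\Omega):\int_\Omega\phi\,d\mu-\int_{\Omega^*}\phi^c\,d\nu=\mathcal T_c(\mu,\nu)\}$.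 $\wedge,\vee$ denote pointwise minimum and maximum. "$\mu_1\leq\mu_2$ on $U$" means $\mu_1(A)\leq\mu_2(A)$ for every Borel $A\subset U$. The support of a signed measure $\sigma$ is the support of its total variation $|\sigma|$, i.e. the complement of the largest open set of $|\sigma|$-measure zero. *)

theory Defs
  imports "HOL-Analysis.Analysis" "HOL-Probability.Probability_Measure"
begin

definition c_transform :: "'a set \<Rightarrow> ('a \<Rightarrow> 'b \<Rightarrow> real) \<Rightarrow> ('a \<Rightarrow> real) \<Rightarrow> 'b \<Rightarrow> real" where
  "c_transform \<Omega> c \<phi> y = (SUP x\<in>\<Omega>. \<phi> x - c x y)"

definition transport_plans ::
  "'a::metric_space set \<Rightarrow> 'b::metric_space set \<Rightarrow> 'a measure \<Rightarrow> 'b measure \<Rightarrow> ('a \<times> 'b) measure set" where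
  "transport_plans \<Omega> \<Omega>' \<mu> \<nu> =
     {\<pi>. sets \<pi> = sets (restrict_space borel (\<Omega> \<times> \<Omega>')) \<and> finite_measure \<pi> \<and>
          distr \<pi> (restrict_space borel \<Omega>) fst = \<mu> \<and>
          distr \<pi> (restrict_space borel \<Omega>') snd = \<nu>}"

text \<open>Optimal transport cost (value +infinity when there is no plan, e.g. masses differ).\<close>
definition transport_cost ::
  "'a::metric_space set \<Rightarrow> 'b::metric_space set \<Rightarrow> ('a \<Rightarrow> 'b \<Rightarrow> real) \<Rightarrow> 'a measure \<Rightarrow> 'b measure \<Rightarrow> ereal" where
  "transport_cost \<Omega> \<Omega>' c \<mu> \<nu> =
     (INF \<pi>\<in>transport_plans \<Omega> \<Omega>' \<mu> \<nu>. ereal (integral\<^sup>L \<pi> (\<lambda>(x, y). c x y)))"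

definition kantorovich_potentials ::
  "'a::metric_space set \<Rightarrow> 'b::metric_space set \<Rightarrow> ('a \<Rightarrow> 'b \<Rightarrow> real) \<Rightarrow> 'a measure \<Rightarrow> 'b measure
     \<Rightarrow> ('a \<Rightarrow> real) set" where
  "kantorovich_potentials \<Omega> \<Omega>' c \<mu> \<nu> =
     {\<phi>. continuous_on \<Omega> \<phi> \<and>
          ereal ((\<integral>x. \<phi> x \<partial>\<mu>) - (\<integral>y. c_transform \<Omega> c \<phi> y \<partial>\<nu>)) = transport_cost \<Omega> \<Omega>' c \<mu> \<nu>}"

definition signed_diff_tv :: "'a measure \<Rightarrow> 'a measure \<Rightarrow> 'a set \<Rightarrow> ereal" where
  "signed_diff_tv \<mu>2 \<mu>1 V =
     (SUP P\<in>{P. finite P \<and> disjoint P \<and> P \<subseteq> sets \<mu>1 \<and> \<Union>P = V}.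
        ereal (\<Sum>A\<in>P. \<bar>measure \<mu>2 A - measure \<mu>1 A\<bar>))"

definition signed_diff_support :: "'a::metric_space set \<Rightarrow> 'a measure \<Rightarrow> 'a measure \<Rightarrow> 'a set" where
  "signed_diff_support \<Omega> \<mu>2 \<mu>1 =
     \<Omega> - \<Union>{V. openin (top_of_set \<Omega>) V \<and> signed_diff_tv \<mu>2 \<mu>1 V = 0}"

end

(*
  Write f = max (\<phi>1 - \<phi>2) 0, so that min \<phi>1 \<phi>2 = \<phi>1 - f and max \<phi>1 \<phi>2 = \<phi>2 + f.
  Pointwise (min \<phi>1 \<phi>2)\<^sup>c \<le> min \<phi>1\<^sup>c \<phi>2\<^sup>c and (max \<phi>1 \<phi>2)\<^sup>c = max \<phi>1\<^sup>c \<phi>2\<^sup>c, so the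
  c-transforms of the minimum and the maximum add up to at most \<phi>1\<^sup>c + \<phi>2\<^sup>c.  As f \<ge> 0 vanishes
  off U, where \<mu>1 \<le> \<mu>2, also \<integral>f d\<mu>1 \<le> \<integral>f d\<mu>2.  Hence, with J\<^sub>\<mu> \<phi> = \<integral>\<phi> d\<mu> - \<integral>\<phi>\<^sup>c d\<nu>,
    J\<^sub>\<mu>\<^sub>1 (min \<phi>1 \<phi>2) + J\<^sub>\<mu>\<^sub>2 (max \<phi>1 \<phi>2) \<ge> J\<^sub>\<mu>\<^sub>1 \<phi>1 + J\<^sub>\<mu>\<^sub>2 \<phi>2 + (\<integral>f d\<mu>2 - \<integral>f d\<mu>1),
  while weak duality bounds each term on the left by the optimal value, attained by \<phi>1 resp. \<phi>2.
  So the minimum and the maximum are optimal, and \<integral>f d\<mu>1 = \<integral>f d\<mu>2.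
  If \<phi>1 x > \<phi>2 x at a point x of the support of \<mu>2 - \<mu>1, then f > \<delta> > 0 on a relatively open
  neighbourhood V \<subseteq> U of x, and \<mu>1 V < \<mu>2 V because |\<mu>2 - \<mu>1| = \<mu>2 - \<mu>1 on subsets of U.
  Comparing the integrals of f - \<delta> 1\<^sub>V instead of f gives \<integral>f d\<mu>2 - \<integral>f d\<mu>1 \<ge> \<delta> (\<mu>2 V - \<mu>1 V) > 0.
*)
theory Submission
  imports Defs
begin

lemma integrable_continuous_on_compact:
  fixes f :: "'a::metric_space \<Rightarrow> real"
  assumes "sets M = sets (restrict_space borel S)" and "finite_measure M"
    and "compact S" and "continuous_on S f"
  shows "integrable M f"
proof -
  have "space M = S"
    using sets_eq_imp_space_eq[OF assms(1)] by (simp add: space_restrict_space)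
  moreover have "f \<in> borel_measurable M"
    using borel_measurable_continuous_on_restrict[OF assms(4)] measurable_cong_sets[OF assms(1) refl]
    by blast
  moreover obtain B where "\<And>x. x \<in> S \<Longrightarrow> norm (f x) \<le> B"
    using compact_imp_bounded[OF compact_continuous_image[OF assms(4,3)]] unfolding bounded_iff by auto
  ultimately show ?thesis
    by (intro finite_measure.integrable_const_bound[OF assms(2), of _ B]) auto
qed

lemma measurable_restrict_space_continuous:
  assumes "continuous_on A f" and "f ` A \<subseteq> B"
  shows "f \<in> measurable (restrict_space borel A) (restrict_space borel B)"
  using assms borel_measurable_continuous_on_restrict[OF assms(1)]
  by (intro measurable_restrict_space2) (auto simp: space_restrict_space)

lemma density_indicator_mono:
  assumes sets_eq: "sets M1 = sets M2" and "finite_measure M1" and "finite_measure M2"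
    and U: "U \<in> sets M2" and le: "\<forall>A \<in> sets M2. A \<subseteq> U \<longrightarrow> measure M1 A \<le> measure M2 A"
  shows "density M1 (indicator U) \<le> density M2 (indicator U)"
proof -
  have "emeasure (density M1 (indicator U)) A \<le> emeasure (density M2 (indicator U)) A" for A
  proof (cases "A \<in> sets M2")
    case True
    then have "A \<inter> U \<in> sets M2" using U by blast
    have "emeasure (density M1 (indicator U)) A = emeasure M1 (A \<inter> U)"
      using True U sets_eq by (simp add: emeasure_restricted Int_commute)
    also have "\<dots> = ennreal (measure M1 (A \<inter> U))"
      using \<open>finite_measure M1\<close> by (simp add: finite_measure.emeasure_eq_measure)
    also have "\<dots> \<le> ennreal (measure M2 (A \<inter> U))"
      using le \<open>A \<inter> U \<in> sets M2\<close> by (intro ennreal_leI) auto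
    also have "\<dots> = emeasure M2 (A \<inter> U)"
      using \<open>finite_measure M2\<close> by (simp add: finite_measure.emeasure_eq_measure)
    also have "\<dots> = emeasure (density M2 (indicator U)) A"
      using True U by (simp add: emeasure_restricted Int_commute)
    finally show ?thesis .
  next
    case False
    then show ?thesis using sets_eq by (simp add: emeasure_notin_sets)
  qed
  moreover have "space M1 = space M2" using sets_eq by (rule sets_eq_imp_space_eq)
  ultimately show ?thesis
    using sets_eq by (simp add: le_measure_iff le_fun_def)
qed

lemma integral_mono_measure_le_on:
  fixes g :: "'a \<Rightarrow> real"
  assumes sets_eq: "sets M1 = sets M2" and "finite_measure M1" and "finite_measure M2"
    and U: "U \<in> sets M2" and "\<forall>A \<in> sets M2. A \<subseteq> U \<longrightarrow> measure M1 A \<le> measure M2 A"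
    and g: "g \<in> borel_measurable M2" and nonneg: "\<And>x. x \<in> space M2 \<Longrightarrow> 0 \<le> g x"
    and vanish: "\<And>x. x \<in> space M2 - U \<Longrightarrow> g x = 0" and "integrable M2 g"
  shows "(\<integral>x. g x \<partial>M1) \<le> (\<integral>x. g x \<partial>M2)"
proof -
  have space_eq: "space M1 = space M2" using sets_eq by (rule sets_eq_imp_space_eq)
  have g1: "g \<in> borel_measurable M1" using g measurable_cong_sets[OF sets_eq refl] by blast
  have nn_integral_density: "(\<integral>\<^sup>+x. g x \<partial>M) = (\<integral>\<^sup>+x. g x \<partial>density M (indicator U))"
    if "g \<in> borel_measurable M" "U \<in> sets M" "space M = space M2" for M
  proof -
    have "(\<integral>\<^sup>+x. g x \<partial>density M (indicator U)) = (\<integral>\<^sup>+x. indicator U x * ennreal (g x) \<partial>M)"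
      using that by (intro nn_integral_density) auto
    also have "\<dots> = (\<integral>\<^sup>+x. g x \<partial>M)"
      using that vanish by (intro nn_integral_cong) (auto simp: indicator_def)
    finally show ?thesis by simp
  qed
  have "(\<integral>\<^sup>+x. g x \<partial>M1) \<le> (\<integral>\<^sup>+x. g x \<partial>M2)"
    unfolding nn_integral_density[OF g1 U[folded sets_eq] space_eq] nn_integral_density[OF g U refl]
    using sets_eq density_indicator_mono[OF assms(1-5)] by (simp add: nn_integral_mono_measure)
  moreover have "(\<integral>\<^sup>+x. g x \<partial>M2) \<noteq> \<infinity>"
    using integrableD(2)[OF \<open>integrable M2 g\<close>] by simp
  moreover have "(\<integral>x. g x \<partial>M) = enn2real (\<integral>\<^sup>+x. g x \<partial>M)"
    if "g \<in> borel_measurable M" and "space M = space M2" for M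
    using that nonneg by (intro integral_eq_nn_integral) auto
  ultimately show ?thesis
    using g1 g space_eq by (simp add: enn2real_mono top.not_eq_extremum)
qed

lemma signed_diff_tv_eq_measure_diff:
  assumes "sets \<mu>1 = sets \<mu>2" and "finite_measure \<mu>1" and "finite_measure \<mu>2"
    and V: "V \<in> sets \<mu>1" and le: "\<forall>A \<in> sets \<mu>1. A \<subseteq> V \<longrightarrow> measure \<mu>1 A \<le> measure \<mu>2 A"
  shows "signed_diff_tv \<mu>2 \<mu>1 V = ereal (measure \<mu>2 V - measure \<mu>1 V)"
proof -
  let ?partitions = "{P. finite P \<and> disjoint P \<and> P \<subseteq> sets \<mu>1 \<and> \<Union>P = V}"
  have sum_eq: "(\<Sum>A\<in>P. \<bar>measure \<mu>2 A - measure \<mu>1 A\<bar>) = measure \<mu>2 V - measure \<mu>1 V"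
    if "P \<in> ?partitions" for P
  proof -
    from that have P: "finite P" "disjoint P" "P \<subseteq> sets \<mu>1" "\<Union>P = V" by auto
    have "(\<Sum>A\<in>P. \<bar>measure \<mu>2 A - measure \<mu>1 A\<bar>) = (\<Sum>A\<in>P. measure \<mu>2 A) - (\<Sum>A\<in>P. measure \<mu>1 A)"
      using le P(3,4) by (subst sum_subtractf[symmetric], intro sum.cong) auto
    also have "\<dots> = measure \<mu>2 V - measure \<mu>1 V"
    proof -
      have "measure \<mu> V = (\<Sum>A\<in>P. measure \<mu> A)" if "finite_measure \<mu>" and "sets \<mu> = sets \<mu>1" for \<mu>
        unfolding P(4)[symmetric] using P(1-3) that
        by (intro measure_Union') (auto simp: finite_measure.fmeasurable_eq_sets)
      then show ?thesis using assms(1-3) by simp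
    qed
    finally show ?thesis .
  qed
  have "signed_diff_tv \<mu>2 \<mu>1 V = (SUP P\<in>?partitions. ereal (measure \<mu>2 V - measure \<mu>1 V))"
    unfolding signed_diff_tv_def using sum_eq by (intro SUP_cong) auto
  also have "\<dots> = ereal (measure \<mu>2 V - measure \<mu>1 V)"
    using V by (intro SUP_const) (auto intro!: exI[of _ "{V}"])
  finally show ?thesis .
qed

lemma measure_less_if_mem_signed_diff_support:
  assumes "sets \<mu>1 = sets \<mu>2" and "finite_measure \<mu>1" and "finite_measure \<mu>2"
    and "x \<in> signed_diff_support \<Omega> \<mu>2 \<mu>1" and "openin (top_of_set \<Omega>) V" and "x \<in> V"
    and "V \<in> sets \<mu>1" and le: "\<forall>A \<in> sets \<mu>1. A \<subseteq> V \<longrightarrow> measure \<mu>1 A \<le> measure \<mu>2 A"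
  shows "measure \<mu>1 V < measure \<mu>2 V"
proof -
  have "signed_diff_tv \<mu>2 \<mu>1 V \<noteq> 0"
    using assms(4-6) unfolding signed_diff_support_def by blast
  then have "measure \<mu>2 V \<noteq> measure \<mu>1 V"
    unfolding signed_diff_tv_eq_measure_diff[OF assms(1-3,7) le] by (simp add: zero_ereal_def)
  moreover have "measure \<mu>1 V \<le> measure \<mu>2 V"
    using le \<open>V \<in> sets \<mu>1\<close> by blast
  ultimately show ?thesis by linarith
qed

lemma measure_diff_le_integral_diff:
  fixes g :: "'a \<Rightarrow> real"
  assumes sets_eq: "sets M1 = sets M2" and "finite_measure M1" and "finite_measure M2"
    and U: "U \<in> sets M2" and le: "\<forall>A \<in> sets M2. A \<subseteq> U \<longrightarrow> measure M1 A \<le> measure M2 A"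
    and V: "V \<in> sets M2" and "V \<subseteq> U"
    and g: "g \<in> borel_measurable M2" and "integrable M1 g" and "integrable M2 g"
    and above: "\<And>x. x \<in> V \<Longrightarrow> \<delta> \<le> g x" and nonneg: "\<And>x. x \<in> space M2 \<Longrightarrow> 0 \<le> g x"
    and vanish: "\<And>x. x \<in> space M2 - U \<Longrightarrow> g x = 0"
  shows "\<delta> * (measure M2 V - measure M1 V) \<le> (\<integral>x. g x \<partial>M2) - (\<integral>x. g x \<partial>M1)"
proof -
  have "V \<subseteq> space M2" using V by (rule sets.sets_into_space)
  have integrable_V: "integrable M (indicator V :: 'a \<Rightarrow> real)"
    if "sets M = sets M2" and "finite_measure M" for M
    using that V finite_measure.emeasure_finite[of M V] by (simp add: top.not_eq_extremum)
  let ?h = "\<lambda>x. g x - \<delta> * indicator V x"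
  have "(\<integral>x. ?h x \<partial>M1) \<le> (\<integral>x. ?h x \<partial>M2)"
  proof (rule integral_mono_measure_le_on[OF assms(1-5)])
    show "?h \<in> borel_measurable M2"
      using g V by measurable
    show "integrable M2 ?h"
      using \<open>integrable M2 g\<close> integrable_V[OF refl \<open>finite_measure M2\<close>] by simp
    show "0 \<le> ?h x" if "x \<in> space M2" for x
      using that above nonneg by (cases "x \<in> V") auto
    show "?h x = 0" if "x \<in> space M2 - U" for x
      using that \<open>V \<subseteq> U\<close> vanish by (auto simp: indicator_def)
  qed
  moreover have "(\<integral>x. ?h x \<partial>M) = (\<integral>x. g x \<partial>M) - \<delta> * measure M V"
    if "sets M = sets M2" and "finite_measure M" and "integrable M g" for M
    using that integrable_V \<open>V \<subseteq> space M2\<close> sets_eq_imp_space_eq[OF that(1)]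
    by (simp add: Int_absorb2)
  ultimately show ?thesis
    using sets_eq assms(2,3,9,10) by (simp add: algebra_simps)
qed

lemma integral_pos_part_diff_mono:
  fixes \<phi>1 \<phi>2 :: "'a::metric_space \<Rightarrow> real"
  assumes "sets \<mu>1 = sets (restrict_space borel \<Omega>)" and "finite_measure \<mu>1"
    and sets_\<mu>2: "sets \<mu>2 = sets (restrict_space borel \<Omega>)" and "finite_measure \<mu>2"
    and "compact \<Omega>" and "U \<in> sets (restrict_space borel \<Omega>)"
    and "\<forall>A \<in> sets (restrict_space borel \<Omega>). A \<subseteq> U \<longrightarrow> measure \<mu>1 A \<le> measure \<mu>2 A"
    and "continuous_on \<Omega> \<phi>1" and "continuous_on \<Omega> \<phi>2"
    and off_U: "\<forall>x \<in> \<Omega> - U. \<phi>1 x \<le> \<phi>2 x"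
  shows "(\<integral>x. max (\<phi>1 x - \<phi>2 x) 0 \<partial>\<mu>1) \<le> (\<integral>x. max (\<phi>1 x - \<phi>2 x) 0 \<partial>\<mu>2)"
proof (rule integral_mono_measure_le_on[where U = U])
  have "continuous_on \<Omega> (\<lambda>x. max (\<phi>1 x - \<phi>2 x) 0)"
    using assms(8,9) by (intro continuous_on_max continuous_on_diff continuous_on_const)
  then show "(\<lambda>x. max (\<phi>1 x - \<phi>2 x) 0) \<in> borel_measurable \<mu>2"
    and "integrable \<mu>2 (\<lambda>x. max (\<phi>1 x - \<phi>2 x) 0)"
    using sets_\<mu>2 \<open>finite_measure \<mu>2\<close> \<open>compact \<Omega>\<close>
    by (simp_all add: borel_measurable_continuous_on_restrict measurable_cong_sets[OF sets_\<mu>2 refl]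
        integrable_continuous_on_compact)
  show "max (\<phi>1 x - \<phi>2 x) 0 = 0" if "x \<in> space \<mu>2 - U" for x
    using that off_U sets_eq_imp_space_eq[OF sets_\<mu>2] by (simp add: space_restrict_space)
qed (use assms(1-7) in simp_all)

lemma exists_superlevel_set_measure_less:
  fixes g :: "'a::metric_space \<Rightarrow> real"
  assumes sets_\<mu>1: "sets \<mu>1 = sets (restrict_space borel \<Omega>)" and "finite_measure \<mu>1"
    and sets_\<mu>2: "sets \<mu>2 = sets (restrict_space borel \<Omega>)" and "finite_measure \<mu>2"
    and le: "\<forall>A \<in> sets (restrict_space borel \<Omega>). A \<subseteq> U \<longrightarrow> measure \<mu>1 A \<le> measure \<mu>2 A"
    and g: "continuous_on \<Omega> g" and off_U: "\<forall>y \<in> \<Omega> - U. g y \<le> 0"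
    and x: "x \<in> signed_diff_support \<Omega> \<mu>2 \<mu>1" and "0 < g x"
  obtains \<delta> V where "0 < \<delta>" and "V \<in> sets (restrict_space borel \<Omega>)" and "V \<subseteq> U"
    and "\<And>y. y \<in> V \<Longrightarrow> \<delta> < g y" and "measure \<mu>1 V < measure \<mu>2 V"
proof -
  define \<delta> where "\<delta> = g x / 2"
  define V where "V = {y \<in> \<Omega>. \<delta> < g y}"
  have "0 < \<delta>" using \<open>0 < g x\<close> unfolding \<delta>_def by simp
  have "openin (top_of_set \<Omega>) V"
    unfolding V_def using continuous_openin_preimage_gen[OF g open_greaterThan, of \<delta>]
    by (simp add: vimage_def Int_def conj_commute)
  moreover have "x \<in> V"
    using x \<open>0 < g x\<close> unfolding V_def \<delta>_def signed_diff_support_def by auto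
  moreover have "V \<subseteq> U"
    using off_U \<open>0 < \<delta>\<close> unfolding V_def by force
  moreover have V: "V \<in> sets (restrict_space borel \<Omega>)"
    using measurable_sets[OF borel_measurable_continuous_on_restrict[OF g], of "{\<delta><..}"]
    by (simp add: V_def space_restrict_space vimage_def Int_def conj_commute)
  ultimately have "measure \<mu>1 V < measure \<mu>2 V"
    using le x sets_\<mu>1 sets_\<mu>2 \<open>finite_measure \<mu>1\<close> \<open>finite_measure \<mu>2\<close>
    by (intro measure_less_if_mem_signed_diff_support) auto
  then show ?thesis
    using that \<open>0 < \<delta>\<close> V \<open>V \<subseteq> U\<close> unfolding V_def by blast
qed

lemma le_on_signed_diff_support:
  fixes \<phi>1 \<phi>2 :: "'a::metric_space \<Rightarrow> real"
  assumes sets_\<mu>1: "sets \<mu>1 = sets (restrict_space borel \<Omega>)" and "finite_measure \<mu>1"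
    and sets_\<mu>2: "sets \<mu>2 = sets (restrict_space borel \<Omega>)" and "finite_measure \<mu>2"
    and "compact \<Omega>" and U: "U \<in> sets (restrict_space borel \<Omega>)"
    and le: "\<forall>A \<in> sets (restrict_space borel \<Omega>). A \<subseteq> U \<longrightarrow> measure \<mu>1 A \<le> measure \<mu>2 A"
    and cont1: "continuous_on \<Omega> \<phi>1" and cont2: "continuous_on \<Omega> \<phi>2"
    and off_U: "\<forall>x \<in> \<Omega> - U. \<phi>1 x \<le> \<phi>2 x"
    and balanced: "(\<integral>x. max (\<phi>1 x - \<phi>2 x) 0 \<partial>\<mu>2) \<le> (\<integral>x. max (\<phi>1 x - \<phi>2 x) 0 \<partial>\<mu>1)"
    and x: "x \<in> signed_diff_support \<Omega> \<mu>2 \<mu>1"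
  shows "\<phi>1 x \<le> \<phi>2 x"
proof (rule ccontr)
  let ?f = "\<lambda>x. max (\<phi>1 x - \<phi>2 x) 0"
  have cont_diff: "continuous_on \<Omega> (\<lambda>y. \<phi>1 y - \<phi>2 y)"
    using cont1 cont2 by (rule continuous_on_diff)
  assume "\<not> \<phi>1 x \<le> \<phi>2 x"
  moreover have "\<forall>y \<in> \<Omega> - U. \<phi>1 y - \<phi>2 y \<le> 0"
    using off_U by simp
  ultimately obtain \<delta> V where "0 < \<delta>" and V: "V \<in> sets (restrict_space borel \<Omega>)" "V \<subseteq> U"
    and above: "\<And>y. y \<in> V \<Longrightarrow> \<delta> < \<phi>1 y - \<phi>2 y" and "measure \<mu>1 V < measure \<mu>2 V"
    using exists_superlevel_set_measure_less[OF assms(1-4) le cont_diff _ x, of thesis] by simp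
  have "\<delta> * (measure \<mu>2 V - measure \<mu>1 V) \<le> (\<integral>x. ?f x \<partial>\<mu>2) - (\<integral>x. ?f x \<partial>\<mu>1)"
  proof (rule measure_diff_le_integral_diff[where U = U])
    have "continuous_on \<Omega> ?f"
      using cont_diff by (intro continuous_on_max continuous_on_const)
    then show "?f \<in> borel_measurable \<mu>2" and "integrable \<mu>1 ?f" and "integrable \<mu>2 ?f"
      using sets_\<mu>1 sets_\<mu>2 \<open>finite_measure \<mu>1\<close> \<open>finite_measure \<mu>2\<close> \<open>compact \<Omega>\<close>
      by (simp_all add: integrable_continuous_on_compact borel_measurable_continuous_on_restrict
          measurable_cong_sets[OF sets_\<mu>2 refl])
    show "\<delta> \<le> ?f y" if "y \<in> V" for y
      using above[OF that] by (simp add: le_max_iff_disj)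
    show "?f y = 0" if "y \<in> space \<mu>2 - U" for y
      using that off_U sets_eq_imp_space_eq[OF sets_\<mu>2] by (simp add: space_restrict_space)
  qed (use sets_\<mu>1 sets_\<mu>2 \<open>finite_measure \<mu>1\<close> \<open>finite_measure \<mu>2\<close> U le V in simp_all)
  then show False
    using balanced \<open>0 < \<delta>\<close> \<open>measure \<mu>1 V < measure \<mu>2 V\<close> by (smt (verit) mult_pos_pos)
qed

lemma c_transform_least:
  assumes "\<Omega> \<noteq> {}" and "\<And>x. x \<in> \<Omega> \<Longrightarrow> \<phi> x - c x y \<le> B"
  shows "c_transform \<Omega> c \<phi> y \<le> B"
  unfolding c_transform_def using assms by (intro cSUP_least) auto

definition kantorovich_value ::
  "'a set \<Rightarrow> ('a \<Rightarrow> 'b \<Rightarrow> real) \<Rightarrow> 'a measure \<Rightarrow> 'b measure \<Rightarrow> ('a \<Rightarrow> real) \<Rightarrow> real" where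
  "kantorovich_value \<Omega> c \<mu> \<nu> \<phi> = (\<integral>x. \<phi> x \<partial>\<mu>) - (\<integral>y. c_transform \<Omega> c \<phi> y \<partial>\<nu>)"

lemma kantorovich_potentials_iff:
  "\<phi> \<in> kantorovich_potentials \<Omega> \<Omega>' c \<mu> \<nu> \<longleftrightarrow>
     continuous_on \<Omega> \<phi> \<and> ereal (kantorovich_value \<Omega> c \<mu> \<nu> \<phi>) = transport_cost \<Omega> \<Omega>' c \<mu> \<nu>"
  unfolding kantorovich_potentials_def kantorovich_value_def by simp

locale compact_cost =
  fixes \<Omega> :: "'a::metric_space set" and \<Omega>' :: "'b::metric_space set"
    and c :: "'a \<Rightarrow> 'b \<Rightarrow> real"
  assumes compact_source: "compact \<Omega>" and compact_target: "compact \<Omega>'"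
    and continuous_cost: "continuous_on (\<Omega> \<times> \<Omega>') (\<lambda>(x, y). c x y)"
begin

lemma continuous_on_cost_left:
  assumes "y \<in> \<Omega>'"
  shows "continuous_on \<Omega> (\<lambda>x. c x y)"
proof -
  have "continuous_on \<Omega> (\<lambda>x. (\<lambda>(x, y). c x y) (x, y))"
    using assms by (intro continuous_on_compose2[OF continuous_cost]) (auto intro!: continuous_intros)
  then show ?thesis by simp
qed

lemma c_transform_upper:
  assumes "continuous_on \<Omega> \<phi>" and "y \<in> \<Omega>'" and "x \<in> \<Omega>"
  shows "\<phi> x - c x y \<le> c_transform \<Omega> c \<phi> y"
proof -
  have "compact ((\<lambda>x. \<phi> x - c x y) ` \<Omega>)"
    using assms(1,2) compact_source
    by (intro compact_continuous_image continuous_on_diff continuous_on_cost_left)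
  then have "bdd_above ((\<lambda>x. \<phi> x - c x y) ` \<Omega>)"
    by (simp add: bounded_imp_bdd_above compact_imp_bounded)
  then show ?thesis
    unfolding c_transform_def using assms(3) by (rule cSUP_upper2) simp
qed

lemma c_transform_mono:
  assumes "continuous_on \<Omega> \<psi>" and "\<Omega> \<noteq> {}" and "y \<in> \<Omega>'"
    and "\<And>x. x \<in> \<Omega> \<Longrightarrow> \<phi> x \<le> \<psi> x"
  shows "c_transform \<Omega> c \<phi> y \<le> c_transform \<Omega> c \<psi> y"
proof (rule c_transform_least[OF assms(2)])
  fix x assume "x \<in> \<Omega>"
  then show "\<phi> x - c x y \<le> c_transform \<Omega> c \<psi> y"
    using assms(4) c_transform_upper[OF assms(1,3)] by (smt (verit))
qed

lemma c_transform_max: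
  assumes "continuous_on \<Omega> \<phi>1" and "continuous_on \<Omega> \<phi>2" and "\<Omega> \<noteq> {}" and "y \<in> \<Omega>'"
  shows "c_transform \<Omega> c (\<lambda>x. max (\<phi>1 x) (\<phi>2 x)) y
    = max (c_transform \<Omega> c \<phi>1 y) (c_transform \<Omega> c \<phi>2 y)"
proof (rule antisym)
  show "c_transform \<Omega> c (\<lambda>x. max (\<phi>1 x) (\<phi>2 x)) y
      \<le> max (c_transform \<Omega> c \<phi>1 y) (c_transform \<Omega> c \<phi>2 y)"
  proof (rule c_transform_least[OF assms(3)])
    fix x assume "x \<in> \<Omega>"
    then show "max (\<phi>1 x) (\<phi>2 x) - c x y \<le> max (c_transform \<Omega> c \<phi>1 y) (c_transform \<Omega> c \<phi>2 y)"
      using c_transform_upper[OF assms(1,4)] c_transform_upper[OF assms(2,4)] by (smt (verit))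
  qed
  have "continuous_on \<Omega> (\<lambda>x. max (\<phi>1 x) (\<phi>2 x))"
    using assms(1,2) by (rule continuous_on_max)
  then show "max (c_transform \<Omega> c \<phi>1 y) (c_transform \<Omega> c \<phi>2 y)
      \<le> c_transform \<Omega> c (\<lambda>x. max (\<phi>1 x) (\<phi>2 x)) y"
    using assms(3,4) by (auto intro!: c_transform_mono)
qed

lemma c_transform_min_plus_max_le:
  assumes "continuous_on \<Omega> \<phi>1" and "continuous_on \<Omega> \<phi>2" and "\<Omega> \<noteq> {}" and "y \<in> \<Omega>'"
  shows "c_transform \<Omega> c (\<lambda>x. min (\<phi>1 x) (\<phi>2 x)) y + c_transform \<Omega> c (\<lambda>x. max (\<phi>1 x) (\<phi>2 x)) y
    \<le> c_transform \<Omega> c \<phi>1 y + c_transform \<Omega> c \<phi>2 y"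
proof -
  have "c_transform \<Omega> c (\<lambda>x. min (\<phi>1 x) (\<phi>2 x)) y \<le> c_transform \<Omega> c \<phi>1 y"
    and "c_transform \<Omega> c (\<lambda>x. min (\<phi>1 x) (\<phi>2 x)) y \<le> c_transform \<Omega> c \<phi>2 y"
    using assms by (auto intro!: c_transform_mono)
  then show ?thesis
    using c_transform_max[OF assms] by (smt (verit))
qed

lemma abs_c_transform_diff_le:
  assumes "continuous_on \<Omega> \<phi>" and "\<Omega> \<noteq> {}" and "y \<in> \<Omega>'" and "y' \<in> \<Omega>'"
    and "\<And>x. x \<in> \<Omega> \<Longrightarrow> \<bar>c x y - c x y'\<bar> \<le> e"
  shows "\<bar>c_transform \<Omega> c \<phi> y - c_transform \<Omega> c \<phi> y'\<bar> \<le> e"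
proof -
  have "c_transform \<Omega> c \<phi> y \<le> c_transform \<Omega> c \<phi> y' + e"
  proof (rule c_transform_least[OF assms(2)])
    fix x assume "x \<in> \<Omega>"
    then show "\<phi> x - c x y \<le> c_transform \<Omega> c \<phi> y' + e"
      using c_transform_upper[OF assms(1,4)] assms(5) by (smt (verit))
  qed
  moreover have "c_transform \<Omega> c \<phi> y' \<le> c_transform \<Omega> c \<phi> y + e"
  proof (rule c_transform_least[OF assms(2)])
    fix x assume "x \<in> \<Omega>"
    then show "\<phi> x - c x y' \<le> c_transform \<Omega> c \<phi> y + e"
      using c_transform_upper[OF assms(1,3)] assms(5) by (smt (verit))
  qed
  ultimately show ?thesis by linarith
qed

lemma continuous_on_c_transform:
  assumes "continuous_on \<Omega> \<phi>" and "\<Omega> \<noteq> {}"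
  shows "continuous_on \<Omega>' (c_transform \<Omega> c \<phi>)"
  unfolding continuous_on_iff
proof (intro ballI allI impI)
  fix y and e :: real
  assume y: "y \<in> \<Omega>'" and "0 < e"
  have "uniformly_continuous_on (\<Omega> \<times> \<Omega>') (\<lambda>(x, y). c x y)"
    using continuous_cost compact_Times[OF compact_source compact_target]
    by (rule compact_uniformly_continuous)
  then obtain d where "d > 0" and d: "\<And>p p'. p \<in> \<Omega> \<times> \<Omega>' \<Longrightarrow> p' \<in> \<Omega> \<times> \<Omega>' \<Longrightarrow> dist p' p < d
      \<Longrightarrow> dist ((\<lambda>(x, y). c x y) p') ((\<lambda>(x, y). c x y) p) < e / 2"
    using \<open>0 < e\<close> unfolding uniformly_continuous_on_def by (metis half_gt_zero)
  have "\<bar>c_transform \<Omega> c \<phi> y' - c_transform \<Omega> c \<phi> y\<bar> \<le> e / 2"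
    if "y' \<in> \<Omega>'" and "dist y' y < d" for y'
    using d[of "(_, y)" "(_, y')"] that y
    by (intro abs_c_transform_diff_le assms) (auto simp: dist_Pair_Pair dist_real_def less_imp_le)
  then show "\<exists>d>0. \<forall>y'\<in>\<Omega>'. dist y' y < d \<longrightarrow> dist (c_transform \<Omega> c \<phi> y') (c_transform \<Omega> c \<phi> y) < e"
    using \<open>d > 0\<close> \<open>0 < e\<close> by (force simp: dist_real_def)
qed

lemma integrable_c_transform:
  assumes "sets \<nu> = sets (restrict_space borel \<Omega>')" and "finite_measure \<nu>"
    and "continuous_on \<Omega> \<phi>" and "\<Omega> \<noteq> {}"
  shows "integrable \<nu> (c_transform \<Omega> c \<phi>)"
  using assms compact_target continuous_on_c_transform by (blast intro: integrable_continuous_on_compact)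

lemma kantorovich_value_le_transport_cost:
  assumes "continuous_on \<Omega> \<phi>" and "\<Omega> \<noteq> {}"
  shows "ereal (kantorovich_value \<Omega> c \<mu> \<nu> \<phi>) \<le> transport_cost \<Omega> \<Omega>' c \<mu> \<nu>"
  unfolding transport_cost_def
proof (rule INF_greatest)
  fix \<pi> assume "\<pi> \<in> transport_plans \<Omega> \<Omega>' \<mu> \<nu>"
  then have sets_\<pi>: "sets \<pi> = sets (restrict_space borel (\<Omega> \<times> \<Omega>'))" and "finite_measure \<pi>"
    and \<mu>: "distr \<pi> (restrict_space borel \<Omega>) fst = \<mu>" and \<nu>: "distr \<pi> (restrict_space borel \<Omega>') snd = \<nu>"
    unfolding transport_plans_def by blast+
  have space_\<pi>: "space \<pi> = \<Omega> \<times> \<Omega>'"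
    using sets_eq_imp_space_eq[OF sets_\<pi>] by (simp add: space_restrict_space)
  let ?\<phi>c = "c_transform \<Omega> c \<phi>"
  have cont_\<phi>c: "continuous_on \<Omega>' ?\<phi>c"
    using assms by (rule continuous_on_c_transform)
  have "fst \<in> measurable \<pi> (restrict_space borel \<Omega>)"
    unfolding measurable_cong_sets[OF sets_\<pi> refl]
    by (rule measurable_restrict_space_continuous) (auto intro: continuous_on_fst continuous_on_id)
  then have int_\<mu>: "(\<integral>x. \<phi> x \<partial>\<mu>) = (\<integral>z. \<phi> (fst z) \<partial>\<pi>)"
    unfolding \<mu>[symmetric] by (rule integral_distr[OF _ borel_measurable_continuous_on_restrict[OF assms(1)]])
  have "snd \<in> measurable \<pi> (restrict_space borel \<Omega>')"
    unfolding measurable_cong_sets[OF sets_\<pi> refl]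
    by (rule measurable_restrict_space_continuous) (auto intro: continuous_on_snd continuous_on_id)
  then have int_\<nu>: "(\<integral>y. ?\<phi>c y \<partial>\<nu>) = (\<integral>z. ?\<phi>c (snd z) \<partial>\<pi>)"
    unfolding \<nu>[symmetric] by (rule integral_distr[OF _ borel_measurable_continuous_on_restrict[OF cont_\<phi>c]])
  have integrable_\<pi>: "integrable \<pi> f" if "continuous_on (\<Omega> \<times> \<Omega>') f" for f :: "_ \<Rightarrow> real"
    using sets_\<pi> \<open>finite_measure \<pi>\<close> compact_Times[OF compact_source compact_target] that
    by (rule integrable_continuous_on_compact)
  have "continuous_on (\<Omega> \<times> \<Omega>') (\<lambda>z. \<phi> (fst z))"
    by (rule continuous_on_compose2[OF assms(1) continuous_on_fst[OF continuous_on_id]]) auto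
  moreover have "continuous_on (\<Omega> \<times> \<Omega>') (\<lambda>z. ?\<phi>c (snd z))"
    by (rule continuous_on_compose2[OF cont_\<phi>c continuous_on_snd[OF continuous_on_id]]) auto
  ultimately have integrable_fst: "integrable \<pi> (\<lambda>z. \<phi> (fst z))"
    and integrable_snd: "integrable \<pi> (\<lambda>z. ?\<phi>c (snd z))"
    by (simp_all add: integrable_\<pi>)
  have "kantorovich_value \<Omega> c \<mu> \<nu> \<phi> = (\<integral>z. \<phi> (fst z) - ?\<phi>c (snd z) \<partial>\<pi>)"
    unfolding kantorovich_value_def int_\<mu> int_\<nu>
    by (rule Bochner_Integration.integral_diff[OF integrable_fst integrable_snd, symmetric])
  also have "\<dots> \<le> integral\<^sup>L \<pi> (\<lambda>(x, y). c x y)"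
  proof (rule integral_mono[OF Bochner_Integration.integrable_diff[OF integrable_fst integrable_snd]
        integrable_\<pi>[OF continuous_cost]])
    fix z assume "z \<in> space \<pi>"
    then obtain x y where "z = (x, y)" and "x \<in> \<Omega>" and "y \<in> \<Omega>'"
      unfolding space_\<pi> by blast
    then show "\<phi> (fst z) - ?\<phi>c (snd z) \<le> (case z of (x, y) \<Rightarrow> c x y)"
      using c_transform_upper[OF assms(1)] by (smt (verit) case_prod_conv fst_conv snd_conv)
  qed
  finally show "ereal (kantorovich_value \<Omega> c \<mu> \<nu> \<phi>) \<le> ereal (integral\<^sup>L \<pi> (\<lambda>(x, y). c x y))"
    by simp
qed

lemma kantorovich_value_le_potential:
  assumes "\<phi>\<^sub>0 \<in> kantorovich_potentials \<Omega> \<Omega>' c \<mu> \<nu>" and "continuous_on \<Omega> \<phi>" and "\<Omega> \<noteq> {}"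
  shows "kantorovich_value \<Omega> c \<mu> \<nu> \<phi> \<le> kantorovich_value \<Omega> c \<mu> \<nu> \<phi>\<^sub>0"
  using kantorovich_value_le_transport_cost[OF assms(2,3)] assms(1)
  unfolding kantorovich_potentials_iff by (metis ereal_less_eq(3))

lemma kantorovich_value_min_plus_max_ge:
  assumes "sets \<mu>1 = sets (restrict_space borel \<Omega>)" and "finite_measure \<mu>1"
    and "sets \<mu>2 = sets (restrict_space borel \<Omega>)" and "finite_measure \<mu>2"
    and sets_\<nu>: "sets \<nu> = sets (restrict_space borel \<Omega>')" and "finite_measure \<nu>"
    and cont1: "continuous_on \<Omega> \<phi>1" and cont2: "continuous_on \<Omega> \<phi>2" and "\<Omega> \<noteq> {}"
  defines "f \<equiv> \<lambda>x. max (\<phi>1 x - \<phi>2 x) 0"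
  shows "kantorovich_value \<Omega> c \<mu>1 \<nu> \<phi>1 + kantorovich_value \<Omega> c \<mu>2 \<nu> \<phi>2
           + ((\<integral>x. f x \<partial>\<mu>2) - (\<integral>x. f x \<partial>\<mu>1))
         \<le> kantorovich_value \<Omega> c \<mu>1 \<nu> (\<lambda>x. min (\<phi>1 x) (\<phi>2 x))
           + kantorovich_value \<Omega> c \<mu>2 \<nu> (\<lambda>x. max (\<phi>1 x) (\<phi>2 x))"
proof -
  let ?\<psi> = "\<lambda>x. min (\<phi>1 x) (\<phi>2 x)" and ?\<Psi> = "\<lambda>x. max (\<phi>1 x) (\<phi>2 x)"
  have cont_f: "continuous_on \<Omega> f"
    unfolding f_def by (intro continuous_intros cont1 cont2)
  have cont_\<psi>: "continuous_on \<Omega> ?\<psi>" and cont_\<Psi>: "continuous_on \<Omega> ?\<Psi>"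
    using cont1 cont2 by (auto intro: continuous_on_min continuous_on_max)
  have "?\<psi> = (\<lambda>x. \<phi>1 x - f x)" and "?\<Psi> = (\<lambda>x. \<phi>2 x + f x)"
    unfolding f_def by (auto simp: fun_eq_iff)
  then have "(\<integral>x. ?\<psi> x \<partial>\<mu>1) = (\<integral>x. \<phi>1 x \<partial>\<mu>1) - (\<integral>x. f x \<partial>\<mu>1)"
    and "(\<integral>x. ?\<Psi> x \<partial>\<mu>2) = (\<integral>x. \<phi>2 x \<partial>\<mu>2) + (\<integral>x. f x \<partial>\<mu>2)"
    using assms(1-4) cont1 cont2 cont_f compact_source
    by (simp_all add: integrable_continuous_on_compact)
  moreover have "(\<integral>y. c_transform \<Omega> c ?\<psi> y \<partial>\<nu>) + (\<integral>y. c_transform \<Omega> c ?\<Psi> y \<partial>\<nu>)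
      \<le> (\<integral>y. c_transform \<Omega> c \<phi>1 y \<partial>\<nu>) + (\<integral>y. c_transform \<Omega> c \<phi>2 y \<partial>\<nu>)"
  proof -
    have space_\<nu>: "space \<nu> = \<Omega>'"
      using sets_eq_imp_space_eq[OF sets_\<nu>] by (simp add: space_restrict_space)
    have "integrable \<nu> (c_transform \<Omega> c \<phi>)" if "continuous_on \<Omega> \<phi>" for \<phi>
      using sets_\<nu> \<open>finite_measure \<nu>\<close> that \<open>\<Omega> \<noteq> {}\<close> by (rule integrable_c_transform)
    then show ?thesis
      using cont1 cont2 cont_\<psi> cont_\<Psi> c_transform_min_plus_max_le[OF cont1 cont2 \<open>\<Omega> \<noteq> {}\<close>]
      by (auto simp flip: Bochner_Integration.integral_add intro!: integral_mono simp: space_\<nu>)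
  qed
  ultimately show ?thesis
    unfolding kantorovich_value_def by linarith
qed

end

theorem theorem3p1:
  fixes \<Omega> :: "'a::metric_space set" and \<Omega>' :: "'b::metric_space set"
    and c :: "'a \<Rightarrow> 'b \<Rightarrow> real"
    and \<mu>1 \<mu>2 :: "'a measure" and \<nu> :: "'b measure"
    and \<phi>1 \<phi>2 :: "'a \<Rightarrow> real" and U :: "'a set"
  assumes "compact \<Omega>" and "compact \<Omega>'"
    and "continuous_on (\<Omega> \<times> \<Omega>') (\<lambda>(x, y). c x y)"
    and "sets \<mu>1 = sets (restrict_space borel \<Omega>)" and "prob_space \<mu>1"
    and "sets \<mu>2 = sets (restrict_space borel \<Omega>)" and "prob_space \<mu>2"
    and "sets \<nu> = sets (restrict_space borel \<Omega>')" and "prob_space \<nu>"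
    and "\<phi>1 \<in> kantorovich_potentials \<Omega> \<Omega>' c \<mu>1 \<nu>"
    and "\<phi>2 \<in> kantorovich_potentials \<Omega> \<Omega>' c \<mu>2 \<nu>"
    and "U \<in> sets (restrict_space borel \<Omega>)"
    and "\<forall>A \<in> sets (restrict_space borel \<Omega>). A \<subseteq> U \<longrightarrow> measure \<mu>1 A \<le> measure \<mu>2 A"
    and "\<forall>x \<in> \<Omega> - U. \<phi>1 x \<le> \<phi>2 x"
  shows "(\<lambda>x. min (\<phi>1 x) (\<phi>2 x)) \<in> kantorovich_potentials \<Omega> \<Omega>' c \<mu>1 \<nu> \<and>
         (\<lambda>x. max (\<phi>1 x) (\<phi>2 x)) \<in> kantorovich_potentials \<Omega> \<Omega>' c \<mu>2 \<nu> \<and>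
         (\<forall>x \<in> signed_diff_support \<Omega> \<mu>2 \<mu>1. \<phi>1 x \<le> \<phi>2 x)"
proof -
  interpret compact_cost \<Omega> \<Omega>' c
    using assms(1-3) by unfold_locales
  have fin: "finite_measure \<mu>1" "finite_measure \<mu>2" "finite_measure \<nu>"
    using assms(5,7,9) by (simp_all add: prob_space.finite_measure)
  have "\<Omega> \<noteq> {}"
    using prob_space.not_empty[OF assms(5)] sets_eq_imp_space_eq[OF assms(4)]
    by (simp add: space_restrict_space)
  have cont: "continuous_on \<Omega> \<phi>1" "continuous_on \<Omega> \<phi>2"
    using assms(10,11) by (simp_all add: kantorovich_potentials_iff)
  let ?\<psi> = "\<lambda>x. min (\<phi>1 x) (\<phi>2 x)" and ?\<Psi> = "\<lambda>x. max (\<phi>1 x) (\<phi>2 x)"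
    and ?f = "\<lambda>x. max (\<phi>1 x - \<phi>2 x) 0"
  have "kantorovich_value \<Omega> c \<mu>1 \<nu> ?\<psi> \<le> kantorovich_value \<Omega> c \<mu>1 \<nu> \<phi>1"
    and "kantorovich_value \<Omega> c \<mu>2 \<nu> ?\<Psi> \<le> kantorovich_value \<Omega> c \<mu>2 \<nu> \<phi>2"
    using kantorovich_value_le_potential[OF assms(10) continuous_on_min[OF cont] \<open>\<Omega> \<noteq> {}\<close>]
      kantorovich_value_le_potential[OF assms(11) continuous_on_max[OF cont] \<open>\<Omega> \<noteq> {}\<close>]
    by simp_all
  moreover have "(\<integral>x. ?f x \<partial>\<mu>1) \<le> (\<integral>x. ?f x \<partial>\<mu>2)"
    using integral_pos_part_diff_mono[OF assms(4) fin(1) assms(6) fin(2) assms(1,12,13) cont assms(14)] .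
  ultimately have "kantorovich_value \<Omega> c \<mu>1 \<nu> ?\<psi> = kantorovich_value \<Omega> c \<mu>1 \<nu> \<phi>1"
    and "kantorovich_value \<Omega> c \<mu>2 \<nu> ?\<Psi> = kantorovich_value \<Omega> c \<mu>2 \<nu> \<phi>2"
    and balanced: "(\<integral>x. ?f x \<partial>\<mu>2) \<le> (\<integral>x. ?f x \<partial>\<mu>1)"
    using kantorovich_value_min_plus_max_ge[OF assms(4) fin(1) assms(6) fin(2) assms(8) fin(3) cont \<open>\<Omega> \<noteq> {}\<close>]
    by linarith+
  then have "?\<psi> \<in> kantorovich_potentials \<Omega> \<Omega>' c \<mu>1 \<nu>" and "?\<Psi> \<in> kantorovich_potentials \<Omega> \<Omega>' c \<mu>2 \<nu>"
    using assms(10,11) cont continuous_on_min[OF cont] continuous_on_max[OF cont]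
    by (simp_all add: kantorovich_potentials_iff)
  moreover have "\<forall>x \<in> signed_diff_support \<Omega> \<mu>2 \<mu>1. \<phi>1 x \<le> \<phi>2 x"
    using le_on_signed_diff_support[OF assms(4) fin(1) assms(6) fin(2) assms(1,12,13) cont assms(14) balanced]
    by blast
  ultimately show ?thesis by blast
qed

end
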